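(* Let $K$ be a field of characteristic zero, and let $N_K$ be the number of roots of unity in $K$. Let $F,G\in K[X]$ satisfy $\deg(F)=d>1$ and $F^k=G^k$ for some $k\in\mathbb{N}$. Then $F^n=G^n$ for some $n$ with $1\le n\le N_K$.
   Context: $F^n$ denotes the $n$-th iterate of $F$ under composition; $\mathbb{N}$ is the set of positive integers. *)

theory Defs
  imports "HOL-Computational_Algebra.Polynomial"
begin

definition poly_iter :: "'a::comm_ring_1 poly \<Rightarrow> nat \<Rightarrow> 'a poly" where
  "poly_iter F n = ((\<lambda>p. pcompose F p) ^^ n) [:0, 1:]"

definition roots_of_unity :: "'a::field set" where
  "roots_of_unity = {x. \<exists>m::nat. m > 0 \<and> x ^ m = 1}"

end

theory Submission
  imports Defs
begin

text \<open>
  Put \<open>H = F\<^sup>k = G\<^sup>k\<close>. All iterates of \<open>F\<close> and of \<open>G\<close> commute with \<open>H\<close>, and in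
  characteristic zero a polynomial commuting with \<open>H\<close> (where \<open>deg H \<ge> 2\<close>) is determined by
  its degree \<open>m\<close> and its leading coefficient: if \<open>Q\<^sub>1 \<noteq> Q\<^sub>2\<close> both commute with \<open>H\<close>, then
  \<open>(Q\<^sub>1 - Q\<^sub>2) \<circ> H = H \<circ> Q\<^sub>1 - H \<circ> Q\<^sub>2 = (Q\<^sub>1 - Q\<^sub>2) S\<close> with \<open>deg S = m (deg H - 1)\<close>, so
  \<open>deg (Q\<^sub>1 - Q\<^sub>2) \<ge> m\<close>, which is impossible when the leading terms agree.
  Hence \<open>F\<^sup>n = G\<^sup>n\<close> as soon as the ratio \<open>r\<^sub>n\<close> of their leading coefficients is \<open>1\<close>.
  This ratio obeys \<open>r\<^sub>0 = 1\<close>, \<open>r\<^sub>n\<^sub>+\<^sub>1 = u r\<^sub>n\<^sup>d\<close> with \<open>d = deg F\<close>, \<open>u = lc G / lc F\<close>, and \<open>r\<^sub>k = 1\<close>. So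
  \<open>u\<close> and all \<open>r\<^sub>n\<close> are roots of unity, and \<open>1\<close> is a periodic point of \<open>x \<mapsto> u x\<^sup>d\<close>
  whose orbit stays among the \<open>N\<^sub>K\<close> roots of unity; it therefore returns to \<open>1\<close> within
  \<open>N\<^sub>K\<close> steps.
\<close>

lemma periodic_point_period_le_card:
  assumes "(f ^^ k) x = x" "k \<ge> 1" "finite A" "\<And>i. (f ^^ i) x \<in> A"
  shows "\<exists>n. 1 \<le> n \<and> n \<le> card A \<and> (f ^^ n) x = x"
proof -
  have "\<not> inj_on (\<lambda>i. (f ^^ i) x) {0..card A}"
  proof
    assume "inj_on (\<lambda>i. (f ^^ i) x) {0..card A}"
    then have "card ((\<lambda>i. (f ^^ i) x) ` {0..card A}) = card A + 1"
      by (simp add: card_image)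
    moreover have "card ((\<lambda>i. (f ^^ i) x) ` {0..card A}) \<le> card A"
      using assms(3,4) by (intro card_mono) auto
    ultimately show False by simp
  qed
  then obtain i j where ij: "i < j" "j \<le> card A" "(f ^^ i) x = (f ^^ j) x"
    unfolding inj_on_def by (metis atLeastAtMost_iff linorder_neqE_nat)
  have periodic: "(f ^^ (i * k)) x = x"
    using assms(1) by (induction i) (simp_all add: funpow_add)
  have "i \<le> i * k"
    using assms(2) by simp
  then have shift: "j - i + i * k = (i * k - i) + j" "i * k = (i * k - i) + i"
    using ij(1) by linarith+
  \<comment> \<open>Run \<open>f\<^sup>i x = f\<^sup>j x\<close> forward until the index \<open>i\<close> reaches the multiple \<open>i k\<close> of the period.\<close>
  have "(f ^^ (j - i)) x = (f ^^ (j - i)) ((f ^^ (i * k)) x)"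
    by (simp only: periodic)
  also have "\<dots> = (f ^^ (i * k - i)) ((f ^^ j) x)"
    by (metis comp_apply funpow_add shift(1))
  also have "\<dots> = (f ^^ (i * k)) x"
    by (metis comp_apply funpow_add shift(2) ij(3))
  finally have "(f ^^ (j - i)) x = x"
    using periodic by simp
  then show ?thesis
    using ij by (intro exI[of _ "j - i"]) auto
qed

lemma funpow_mult_power_at_1:
  fixes u :: "'a::comm_monoid_mult"
  shows "((\<lambda>x. u * x ^ d) ^^ n) 1 = u ^ (\<Sum>i<n. d ^ i)"
proof (induction n)
  case (Suc n)
  have "(\<Sum>i<Suc n. d ^ i) = 1 + d * (\<Sum>i<n. d ^ i)"
    by (subst sum.lessThan_Suc_shift) (simp add: sum_distrib_left)
  with Suc show ?case
    by (simp add: power_add power_mult[symmetric] mult.commute)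
qed simp

lemma power_in_roots_of_unity:
  assumes "x \<in> roots_of_unity"
  shows "x ^ n \<in> roots_of_unity"
proof -
  obtain m :: nat where "m > 0" "x ^ m = 1"
    using assms unfolding roots_of_unity_def by blast
  moreover have "(x ^ n) ^ m = (x ^ m) ^ n"
    by (metis power_mult mult.commute)
  ultimately show ?thesis
    unfolding roots_of_unity_def by auto
qed

lemma periodic_orbit_in_roots_of_unity:
  fixes u :: "'a::field"
  assumes "((\<lambda>x. u * x ^ d) ^^ k) 1 = 1" "k \<ge> 1"
  shows "((\<lambda>x. u * x ^ d) ^^ n) 1 \<in> roots_of_unity"
proof -
  have "u ^ (\<Sum>i<k. d ^ i) = 1"
    using assms(1) unfolding funpow_mult_power_at_1 .
  moreover have "(\<Sum>i<k. d ^ i) \<ge> 1"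
    using assms(2) member_le_sum[of 0 "{..<k}" "\<lambda>i. d ^ i"] by simp
  ultimately have "u \<in> roots_of_unity"
    unfolding roots_of_unity_def by (intro CollectI exI[of _ "\<Sum>i<k. d ^ i"]) simp
  then show ?thesis
    unfolding funpow_mult_power_at_1 by (rule power_in_roots_of_unity)
qed

lemma degree_add_eq_of_lead_coeff_add:
  fixes p q :: "'a::comm_monoid_add poly"
  assumes "degree p = n" "degree q = n" "lead_coeff p + lead_coeff q \<noteq> 0"
  shows "degree (p + q) = n" and "lead_coeff (p + q) = lead_coeff p + lead_coeff q"
proof -
  show "degree (p + q) = n"
  proof (rule order_antisym)
    show "degree (p + q) \<le> n"
      using assms(1,2) by (simp add: degree_add_le)
    show "n \<le> degree (p + q)"
      using assms by (intro le_degree) simp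
  qed
  then show "lead_coeff (p + q) = lead_coeff p + lead_coeff q"
    using assms(1,2) by simp
qed

lemma leading_term_mult_add_pcompose:
  fixes p Q\<^sub>1 Q\<^sub>2 S :: "'a::{idom,ring_char_0} poly"
  assumes deg: "degree Q\<^sub>2 = degree Q\<^sub>1" "degree Q\<^sub>1 \<ge> 1"
    and lc: "lead_coeff Q\<^sub>2 = lead_coeff Q\<^sub>1"
    and "degree p \<ge> 1"
    and deg_S: "degree S = degree Q\<^sub>1 * (degree p - 1)"
    and lc_S: "lead_coeff S = of_nat (degree p) * lead_coeff p * lead_coeff Q\<^sub>1 ^ (degree p - 1)"
  shows "degree (Q\<^sub>1 * S + pcompose p Q\<^sub>2) = degree Q\<^sub>1 * degree p"
    and "lead_coeff (Q\<^sub>1 * S + pcompose p Q\<^sub>2)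
           = of_nat (Suc (degree p)) * lead_coeff p * lead_coeff Q\<^sub>1 ^ degree p"
proof -
  define m where "m = degree Q\<^sub>1"
  define l where "l = lead_coeff Q\<^sub>1"
  have "Q\<^sub>1 \<noteq> 0" "l \<noteq> 0" "p \<noteq> 0"
    using deg(2) \<open>degree p \<ge> 1\<close> l_def by auto
  then have "S \<noteq> 0"
    using lc_S \<open>degree p \<ge> 1\<close> l_def by auto
  have "m + m * (degree p - 1) = m * degree p" "l * l ^ (degree p - 1) = l ^ degree p"
    using \<open>degree p \<ge> 1\<close> by (cases "degree p"; simp)+
  moreover have "degree (Q\<^sub>1 * S) = m + m * (degree p - 1)"
    using deg_S \<open>S \<noteq> 0\<close> \<open>Q\<^sub>1 \<noteq> 0\<close> m_def by (simp add: degree_mult_eq)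
  moreover have "lead_coeff (Q\<^sub>1 * S) = of_nat (degree p) * lead_coeff p * (l * l ^ (degree p - 1))"
    unfolding lead_coeff_mult lc_S l_def by (simp only: ac_simps)
  ultimately have deg_Q\<^sub>1S: "degree (Q\<^sub>1 * S) = m * degree p"
      and lc_Q\<^sub>1S: "lead_coeff (Q\<^sub>1 * S) = of_nat (degree p) * lead_coeff p * l ^ degree p"
    by simp_all
  have deg_pQ\<^sub>2: "degree (pcompose p Q\<^sub>2) = m * degree p"
    using deg m_def by (simp add: degree_pcompose)
  have "lead_coeff (pcompose p Q\<^sub>2) = lead_coeff p * l ^ degree p"
    using deg lc l_def by (simp add: lead_coeff_comp)
  \<comment> \<open>The two leading coefficients are \<open>deg p\<close> and \<open>1\<close> times the same nonzero value; in
     characteristic zero they cannot cancel.\<close>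
  then have lc_sum: "lead_coeff (Q\<^sub>1 * S) + lead_coeff (pcompose p Q\<^sub>2)
      = of_nat (Suc (degree p)) * lead_coeff p * l ^ degree p"
    using lc_Q\<^sub>1S by (simp add: algebra_simps)
  moreover have "of_nat (Suc (degree p)) * lead_coeff p * l ^ degree p \<noteq> 0"
    using \<open>p \<noteq> 0\<close> \<open>l \<noteq> 0\<close> by (simp del: of_nat_Suc)
  ultimately show "degree (Q\<^sub>1 * S + pcompose p Q\<^sub>2) = degree Q\<^sub>1 * degree p"
    and "lead_coeff (Q\<^sub>1 * S + pcompose p Q\<^sub>2)
           = of_nat (Suc (degree p)) * lead_coeff p * lead_coeff Q\<^sub>1 ^ degree p"
    using degree_add_eq_of_lead_coeff_add[OF deg_Q\<^sub>1S deg_pQ\<^sub>2] m_def l_def by simp_all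
qed

lemma pcompose_diff_factorization:
  fixes p Q\<^sub>1 Q\<^sub>2 :: "'a::{idom,ring_char_0} poly"
  assumes deg: "degree Q\<^sub>2 = degree Q\<^sub>1" "degree Q\<^sub>1 \<ge> 1"
    and lc: "lead_coeff Q\<^sub>2 = lead_coeff Q\<^sub>1"
    and "degree p \<ge> 1"
  shows "\<exists>S. pcompose p Q\<^sub>1 - pcompose p Q\<^sub>2 = (Q\<^sub>1 - Q\<^sub>2) * S
           \<and> degree S = degree Q\<^sub>1 * (degree p - 1)
           \<and> lead_coeff S = of_nat (degree p) * lead_coeff p * lead_coeff Q\<^sub>1 ^ (degree p - 1)"
  using assms(4)
proof (induction p)
  case (pCons a p)
  have "p \<noteq> 0"
    using pCons.prems by (auto simp: degree_pCons_0)
  then have deg_lc_pCons: "degree (pCons a p) = Suc (degree p)" "lead_coeff (pCons a p) = lead_coeff p"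
    by simp_all
  have split: "pcompose (pCons a p) Q\<^sub>1 - pcompose (pCons a p) Q\<^sub>2
      = Q\<^sub>1 * (pcompose p Q\<^sub>1 - pcompose p Q\<^sub>2) + (Q\<^sub>1 - Q\<^sub>2) * pcompose p Q\<^sub>2"
    by (simp add: pcompose_pCons algebra_simps)
  show ?case
  proof (cases "degree p = 0")
    case True
    then show ?thesis
      using split deg_lc_pCons \<open>p \<noteq> 0\<close>
      by (intro exI[of _ "pcompose p Q\<^sub>2"]) (auto elim: degree_eq_zeroE)
  next
    case False
    then have "degree p \<ge> 1"
      by simp
    then obtain S where S: "pcompose p Q\<^sub>1 - pcompose p Q\<^sub>2 = (Q\<^sub>1 - Q\<^sub>2) * S"
        "degree S = degree Q\<^sub>1 * (degree p - 1)"
        "lead_coeff S = of_nat (degree p) * lead_coeff p * lead_coeff Q\<^sub>1 ^ (degree p - 1)"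
      using pCons.IH by blast
    have "pcompose (pCons a p) Q\<^sub>1 - pcompose (pCons a p) Q\<^sub>2
        = (Q\<^sub>1 - Q\<^sub>2) * (Q\<^sub>1 * S + pcompose p Q\<^sub>2)"
      unfolding split S(1) by (simp add: algebra_simps)
    with leading_term_mult_add_pcompose[OF deg lc \<open>degree p \<ge> 1\<close> S(2,3)] deg_lc_pCons
    show ?thesis
      by (intro exI[of _ "Q\<^sub>1 * S + pcompose p Q\<^sub>2"]) simp
  qed
qed simp

lemma commuting_poly_eqI:
  fixes H Q\<^sub>1 Q\<^sub>2 :: "'a::{idom,ring_char_0} poly"
  assumes "degree H \<ge> 2"
    and deg: "degree Q\<^sub>2 = degree Q\<^sub>1" and lc: "lead_coeff Q\<^sub>2 = lead_coeff Q\<^sub>1"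
    and comm: "pcompose H Q\<^sub>1 = pcompose Q\<^sub>1 H" "pcompose H Q\<^sub>2 = pcompose Q\<^sub>2 H"
  shows "Q\<^sub>1 = Q\<^sub>2"
proof (cases "degree Q\<^sub>1 = 0")
  case True
  then show ?thesis
    using deg lc by (metis degree_eq_zeroE lead_coeff_pCons(2))
next
  case False
  define m where "m = degree Q\<^sub>1"
  define R where "R = Q\<^sub>1 - Q\<^sub>2"
  show ?thesis
  proof (rule ccontr)
    assume "Q\<^sub>1 \<noteq> Q\<^sub>2"
    then have "R \<noteq> 0"
      by (simp add: R_def)
    have "degree Q\<^sub>1 \<ge> 1" "degree H \<ge> 1"
      using False assms(1) by simp_all
    then obtain S where S: "pcompose H Q\<^sub>1 - pcompose H Q\<^sub>2 = R * S" "degree S = m * (degree H - 1)"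
        "lead_coeff S = of_nat (degree H) * lead_coeff H * lead_coeff Q\<^sub>1 ^ (degree H - 1)"
      unfolding R_def m_def using pcompose_diff_factorization[OF deg _ lc] by blast
    have "S \<noteq> 0"
      using S(3) False assms(1) by auto
    have "R * S = pcompose R H"
      using comm S(1) by (simp add: R_def pcompose_diff)
    then have "degree R + m * (degree H - 1) = degree R * degree H"
      using \<open>R \<noteq> 0\<close> \<open>S \<noteq> 0\<close> S(2) by (metis degree_mult_eq degree_pcompose)
    also have "\<dots> = degree R + degree R * (degree H - 1)"
      using assms(1) by (cases "degree H") auto
    finally have "m \<le> degree R"
      using assms(1) by simp
    moreover have "degree R \<le> m" "coeff R m = 0"
      using deg lc by (simp_all add: R_def m_def degree_diff_le)
    ultimately show False
      using \<open>R \<noteq> 0\<close> by (metis le_antisym leading_coeff_0_iff)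
  qed
qed

lemma poly_iter_0 [simp]: "poly_iter F 0 = [:0, 1:]"
  by (simp add: poly_iter_def)

lemma poly_iter_Suc [simp]: "poly_iter F (Suc n) = pcompose F (poly_iter F n)"
  by (simp add: poly_iter_def)

lemma poly_iter_add: "poly_iter F (m + n) = pcompose (poly_iter F m) (poly_iter F n)"
  by (induction m) (simp_all add: pcompose_pCons pcompose_assoc)

lemma poly_iter_commute:
  "pcompose (poly_iter F m) (poly_iter F n) = pcompose (poly_iter F n) (poly_iter F m)"
  by (simp only: poly_iter_add[symmetric] add.commute)

lemma degree_poly_iter: "degree (poly_iter F n) = degree F ^ n"
  for F :: "'a::idom poly"
  by (induction n) (simp_all add: degree_pcompose)

lemma lead_coeff_poly_iter_Suc:
  fixes F :: "'a::idom poly"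
  assumes "degree F \<ge> 1"
  shows "lead_coeff (poly_iter F (Suc n)) = lead_coeff F * lead_coeff (poly_iter F n) ^ degree F"
  using assms by (simp add: lead_coeff_comp degree_poly_iter)

lemma lead_coeff_poly_iter_ratio:
  fixes F G :: "'a::field poly"
  assumes "degree G = degree F" "degree F \<ge> 1"
  shows "lead_coeff (poly_iter G n)
    = ((\<lambda>x. lead_coeff G / lead_coeff F * x ^ degree F) ^^ n) 1 * lead_coeff (poly_iter F n)"
proof (induction n)
  case (Suc n)
  have "F \<noteq> 0"
    using assms(2) by auto
  with Suc show ?case
    using assms lead_coeff_poly_iter_Suc[of F n] lead_coeff_poly_iter_Suc[of G n]
    by (simp add: power_mult_distrib)
qed simp

lemma poly_iter_nonzero:
  fixes F :: "'a::idom poly"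
  assumes "degree F \<ge> 1"
  shows "poly_iter F n \<noteq> 0"
proof -
  have "degree (poly_iter F n) \<noteq> 0"
    using assms by (simp add: degree_poly_iter)
  then show ?thesis
    by (metis degree_0)
qed

lemma degree_eq_if_poly_iter_eq:
  fixes F G :: "'a::idom poly"
  assumes "poly_iter F k = poly_iter G k" "k \<ge> 1"
  shows "degree G = degree F"
proof -
  have "degree G ^ k = degree F ^ k"
    using assms(1) by (metis degree_poly_iter)
  then show ?thesis
    using assms(2) by (simp add: power_eq_iff_eq_base)
qed

lemma poly_iter_eq_if_lead_coeff_eq:
  fixes F G :: "'a::{idom,ring_char_0} poly"
  assumes "degree F \<ge> 2" "k \<ge> 1" and iter_k: "poly_iter F k = poly_iter G k"
    and "lead_coeff (poly_iter G n) = lead_coeff (poly_iter F n)"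
  shows "poly_iter F n = poly_iter G n"
proof (rule commuting_poly_eqI)
  show "degree (poly_iter F k) \<ge> 2"
    using assms(1,2) self_le_power[of "degree F" k] by (simp add: degree_poly_iter)
  show "degree (poly_iter G n) = degree (poly_iter F n)"
    using degree_eq_if_poly_iter_eq[OF iter_k assms(2)] by (simp add: degree_poly_iter)
  show "pcompose (poly_iter F k) (poly_iter G n) = pcompose (poly_iter G n) (poly_iter F k)"
    unfolding iter_k by (rule poly_iter_commute)
qed (use assms(4) in \<open>simp_all add: poly_iter_commute\<close>)

theorem corollary6p4:
  fixes F G :: "'a::field_char_0 poly" and k :: nat
  assumes "degree F > 1"
    and "k \<ge> 1"
    and "poly_iter F k = poly_iter G k"
  shows "\<exists>n. 1 \<le> n \<and> (finite (roots_of_unity :: 'a set) \<longrightarrow> n \<le> card (roots_of_unity :: 'a set))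
             \<and> poly_iter F n = poly_iter G n"
proof -
  define ratio_step where "ratio_step = (\<lambda>x::'a. lead_coeff G / lead_coeff F * x ^ degree F)"
  have lc: "lead_coeff (poly_iter G n) = (ratio_step ^^ n) 1 * lead_coeff (poly_iter F n)" for n
    using lead_coeff_poly_iter_ratio[of G F n] degree_eq_if_poly_iter_eq[OF assms(3,2)] assms(1)
    unfolding ratio_step_def by simp
  have ratio_k: "(ratio_step ^^ k) 1 = 1"
    using lc[of k] assms(3) poly_iter_nonzero[of F k] assms(1)
    by (metis mult_cancel_right2 leading_coeff_0_iff less_imp_le)
  have iter_eq: "poly_iter F n = poly_iter G n" if "(ratio_step ^^ n) 1 = 1" for n
    by (intro poly_iter_eq_if_lead_coeff_eq[OF _ assms(2,3)]) (use assms(1) lc[of n] that in simp_all)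
  show ?thesis
  proof (cases "finite (roots_of_unity :: 'a set)")
    case True
    have "(ratio_step ^^ i) 1 \<in> roots_of_unity" for i
      using periodic_orbit_in_roots_of_unity[OF ratio_k[unfolded ratio_step_def] assms(2)]
      unfolding ratio_step_def .
    then obtain n where "1 \<le> n" "n \<le> card (roots_of_unity :: 'a set)" "(ratio_step ^^ n) 1 = 1"
      using periodic_point_period_le_card[OF ratio_k assms(2) True] by blast
    then show ?thesis
      using iter_eq by blast
  qed (use assms(2,3) in blast)
qed

end
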